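(* Let $G$ be a finite simple graph on $[d]$. Then $K_G=\langle [I_G]_2\rangle+M_G$.
   Context: A stable set of $G$ is a subset of $[d]$ with no edge of $G$ (including $\emptyset$ and singletons); $S(G)$ is the set of stable sets; $R[G]=\mathbb{K}[x_S : S\in S(G)]$ over a field $\mathbb{K}$, all variables of degree $1$. $I_G$ is the kernel of $\pi:R[G]\to\mathbb{K}[t_1,\dots,t_d,s]$, $\pi(x_S)=s\prod_{j\in S}t_j$; $\langle [I_G]_2\rangle$ is the ideal generated by the degree-$2$ homogeneous elements of $I_G$. $J_G$ is the ideal generated by all $x_{S_1}x_{S_2}-x_{S_3}x_{S_4}$ with $S_i\in S(G)$, $S_1\cap S_2=S_3\cap S_4=\emptyset$, $S_1\cup S_2=S_3\cup S_4$. $M_G=\langle x_Sx_T : S,T\in S(G),\ S\cap T\neq\emptyset\rangle$ and $K_G=J_G+M_G$. *)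

theory Defs
  imports "HOL-Library.Poly_Mapping"
begin

(* Polynomials over a field in variables indexed by subsets of nat
(x_S for a set S) are elements of type ((nat set \<Rightarrow>\<^sub>0 nat) \<Rightarrow>\<^sub>0 'k);
monomials are exponent vectors.  The target ring K[t_1..t_d, s] is
((nat \<Rightarrow>\<^sub>0 nat) \<Rightarrow>\<^sub>0 'k) with t_j the variable j (1 \<le> j \<le> d) and s the variable 0. *)

type_synonym 'k mpoly_sets = "(nat set \<Rightarrow>\<^sub>0 nat) \<Rightarrow>\<^sub>0 'k"
type_synonym 'k mpoly_nat = "(nat \<Rightarrow>\<^sub>0 nat) \<Rightarrow>\<^sub>0 'k"

definition simple_graph_on :: "nat \<Rightarrow> nat set set \<Rightarrow> bool" where
  "simple_graph_on d E \<longleftrightarrow> (\<forall>e\<in>E. e \<subseteq> {1..d} \<and> card e = 2)"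

definition stable_sets :: "nat \<Rightarrow> nat set set \<Rightarrow> nat set set" where
  "stable_sets d E = {S. S \<subseteq> {1..d} \<and> (\<forall>e\<in>E. \<not> e \<subseteq> S)}"

definition var :: "nat set \<Rightarrow> 'k::comm_ring_1 mpoly_sets" where
  "var S = Poly_Mapping.single (Poly_Mapping.single S 1) 1"

definition RG :: "nat \<Rightarrow> nat set set \<Rightarrow> 'k::comm_ring_1 mpoly_sets set" where
  "RG d E = {p. \<forall>\<alpha>\<in>Poly_Mapping.keys p. Poly_Mapping.keys \<alpha> \<subseteq> stable_sets d E}"

definition mdeg :: "(nat set \<Rightarrow>\<^sub>0 nat) \<Rightarrow> nat" where
  "mdeg \<alpha> = (\<Sum>S\<in>Poly_Mapping.keys \<alpha>. Poly_Mapping.lookup \<alpha> S)"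

definition homogeneous_of :: "nat \<Rightarrow> 'k::comm_ring_1 mpoly_sets \<Rightarrow> bool" where
  "homogeneous_of n p \<longleftrightarrow> (\<forall>\<alpha>\<in>Poly_Mapping.keys p. mdeg \<alpha> = n)"

definition pi_exp :: "(nat set \<Rightarrow>\<^sub>0 nat) \<Rightarrow> (nat \<Rightarrow>\<^sub>0 nat)" where
  "pi_exp \<alpha> = (\<Sum>S\<in>Poly_Mapping.keys \<alpha>. Poly_Mapping.single 0 (Poly_Mapping.lookup \<alpha> S)
                 + (\<Sum>j\<in>S. Poly_Mapping.single j (Poly_Mapping.lookup \<alpha> S)))"

(* The K-algebra homomorphism \<pi> : x_S \<mapsto> s * prod_{j\<in>S} t_j, extended linearly. *)
definition piG :: "'k::comm_ring_1 mpoly_sets \<Rightarrow> 'k mpoly_nat" where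
  "piG p = (\<Sum>\<alpha>\<in>Poly_Mapping.keys p. Poly_Mapping.single (pi_exp \<alpha>) (Poly_Mapping.lookup p \<alpha>))"

definition IG :: "nat \<Rightarrow> nat set set \<Rightarrow> 'k::comm_ring_1 mpoly_sets set" where
  "IG d E = {p \<in> RG d E. piG p = 0}"

definition ideal_gen :: "'k::comm_ring_1 mpoly_sets set \<Rightarrow> 'k mpoly_sets set \<Rightarrow> 'k mpoly_sets set" where
  "ideal_gen R X = {p. \<exists>F r. finite F \<and> F \<subseteq> X \<and> (\<forall>g\<in>F. r g \<in> R) \<and> p = (\<Sum>g\<in>F. r g * g)}"

definition ideal_sum :: "'a::plus set \<Rightarrow> 'a set \<Rightarrow> 'a set" where
  "ideal_sum I J = {a + b | a b. a \<in> I \<and> b \<in> J}"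

definition JG :: "nat \<Rightarrow> nat set set \<Rightarrow> 'k::comm_ring_1 mpoly_sets set" where
  "JG d E = ideal_gen (RG d E)
     {var S1 * var S2 - var S3 * var S4 | S1 S2 S3 S4.
        S1 \<in> stable_sets d E \<and> S2 \<in> stable_sets d E \<and> S3 \<in> stable_sets d E \<and> S4 \<in> stable_sets d E
        \<and> S1 \<inter> S2 = {} \<and> S3 \<inter> S4 = {} \<and> S1 \<union> S2 = S3 \<union> S4}"

definition MG :: "nat \<Rightarrow> nat set set \<Rightarrow> 'k::comm_ring_1 mpoly_sets set" where
  "MG d E = ideal_gen (RG d E)
     {var S * var T | S T. S \<in> stable_sets d E \<and> T \<in> stable_sets d E \<and> S \<inter> T \<noteq> {}}"

definition KG :: "nat \<Rightarrow> nat set set \<Rightarrow> 'k::comm_ring_1 mpoly_sets set" where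
  "KG d E = ideal_sum (JG d E) (MG d E)"

end

theory Submission
  imports Defs
begin

(*
  The binomials generating J_G are quadratic and lie in I_G; this gives K_G inside <[I_G]_2> + M_G.
  Conversely, a quadratic p in I_G is a combination of monomials x_S x_T with S, T stable, and
  those with S and T overlapping lie in M_G.  For disjoint S, T the image
  pi(x_S x_T) = s^2 prod_{j in S Un T} t_j is squarefree in the t_j: it is never the image of an
  overlapping monomial, and it determines S Un T.  So pi(p) = 0 forces the coefficients of p on
  each fibre {x_S x_T : S, T disjoint, S Un T = U} to sum to zero, and such a combination is a sum
  of multiples of binomials x_S x_T - x_S' x_T' in J_G.
*)

lemma ideal_genI:
  assumes "finite F" "F \<subseteq> X" "\<forall>g\<in>F. r g \<in> R" "p = (\<Sum>g\<in>F. r g * g)"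
  shows "p \<in> ideal_gen R X"
  using assms unfolding ideal_gen_def by blast

lemma ideal_genE:
  assumes "p \<in> ideal_gen R X"
  obtains F r where "finite F" "F \<subseteq> X" "\<forall>g\<in>F. r g \<in> R" "p = (\<Sum>g\<in>F. r g * g)"
  using assms unfolding ideal_gen_def by blast

lemma zero_mem_ideal_gen: "0 \<in> ideal_gen R X"
  by (rule ideal_genI[of "{}"]) simp_all

lemma mult_generator_mem_ideal_gen: "g \<in> X \<Longrightarrow> r \<in> R \<Longrightarrow> r * g \<in> ideal_gen R X"
  by (rule ideal_genI[of "{g}" X "\<lambda>_. r"]) simp_all

lemma ideal_gen_mono: "X \<subseteq> Y \<Longrightarrow> ideal_gen R X \<subseteq> ideal_gen R Y"
  by (auto elim!: ideal_genE intro!: ideal_genI)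

lemma add_mem_ideal_gen:
  assumes "0 \<in> R" "\<And>a b. a \<in> R \<Longrightarrow> b \<in> R \<Longrightarrow> a + b \<in> R"
    and "p \<in> ideal_gen R X" "q \<in> ideal_gen R X"
  shows "p + q \<in> ideal_gen R X"
proof -
  obtain F r where F: "finite F" "F \<subseteq> X" "\<forall>g\<in>F. r g \<in> R" "p = (\<Sum>g\<in>F. r g * g)"
    using assms(3) by (rule ideal_genE)
  obtain G s where G: "finite G" "G \<subseteq> X" "\<forall>g\<in>G. s g \<in> R" "q = (\<Sum>g\<in>G. s g * g)"
    using assms(4) by (rule ideal_genE)
  define t where "t g = (if g \<in> F then r g else 0) + (if g \<in> G then s g else 0)" for g
  have "t g * g = (if g \<in> F then r g * g else 0) + (if g \<in> G then s g * g else 0)" for g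
    by (simp add: t_def distrib_right)
  then have "p + q = (\<Sum>g\<in>F \<union> G. t g * g)"
    using F(1,4) G(1,4) by (simp add: sum.distrib sum.inter_restrict[symmetric])
  moreover have "t g \<in> R" if "g \<in> F \<union> G" for g
    unfolding t_def using assms(1,2) F(3) G(3) by simp
  ultimately show ?thesis
    using F(1,2) G(1,2) by (intro ideal_genI) auto
qed

lemma mult_mem_ideal_gen:
  assumes "\<And>a b. a \<in> R \<Longrightarrow> b \<in> R \<Longrightarrow> a * b \<in> R" and "a \<in> R" "p \<in> ideal_gen R X"
  shows "a * p \<in> ideal_gen R X"
proof -
  obtain F r where F: "finite F" "F \<subseteq> X" "\<forall>g\<in>F. r g \<in> R" "p = (\<Sum>g\<in>F. r g * g)"
    using assms(3) by (rule ideal_genE)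
  have "a * p = (\<Sum>g\<in>F. (a * r g) * g)"
    unfolding F(4) by (simp add: sum_distrib_left mult.assoc)
  then show ?thesis
    using F(1-3) assms(1,2) by (intro ideal_genI) auto
qed

lemma sum_mem_add_closed:
  assumes "0 \<in> I" "\<And>a b. a \<in> I \<Longrightarrow> b \<in> I \<Longrightarrow> a + b \<in> I" "\<And>x. x \<in> A \<Longrightarrow> f x \<in> I"
  shows "sum f A \<in> I"
  using assms(3) by (induction A rule: infinite_finite_induct) (auto intro: assms(1,2))

lemma ideal_gen_least:
  assumes "0 \<in> I" "\<And>a b. a \<in> I \<Longrightarrow> b \<in> I \<Longrightarrow> a + b \<in> I"
    and "\<And>r g. r \<in> R \<Longrightarrow> g \<in> X \<Longrightarrow> r * g \<in> I"
  shows "ideal_gen R X \<subseteq> I"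
  using assms by (auto elim!: ideal_genE intro!: sum_mem_add_closed)

lemma ideal_sumI: "a \<in> I \<Longrightarrow> b \<in> J \<Longrightarrow> a + b \<in> ideal_sum I J"
  unfolding ideal_sum_def by blast

lemma ideal_sumE:
  assumes "x \<in> ideal_sum I J"
  obtains a b where "x = a + b" "a \<in> I" "b \<in> J"
  using assms unfolding ideal_sum_def by blast

lemma ideal_sum_mono: "I \<subseteq> I' \<Longrightarrow> J \<subseteq> J' \<Longrightarrow> ideal_sum I J \<subseteq> ideal_sum I' J'"
  unfolding ideal_sum_def by blast

lemma ideal_sum_least:
  "I \<subseteq> K \<Longrightarrow> J \<subseteq> K \<Longrightarrow> (\<And>a b. a \<in> K \<Longrightarrow> b \<in> K \<Longrightarrow> a + b \<in> K) \<Longrightarrow> ideal_sum I J \<subseteq> K"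
  unfolding ideal_sum_def by blast

lemma zero_mem_RG: "0 \<in> RG d E"
  unfolding RG_def by simp

lemma single_zero_mem_RG: "Poly_Mapping.single 0 c \<in> RG d E"
  unfolding RG_def by simp

lemma add_mem_RG: "a \<in> RG d E \<Longrightarrow> b \<in> RG d E \<Longrightarrow> a + b \<in> RG d E"
  unfolding RG_def by (auto dest!: keys_add[THEN subsetD])

lemma mult_mem_RG: "a \<in> RG d E \<Longrightarrow> b \<in> RG d E \<Longrightarrow> a * b \<in> RG d E"
  unfolding RG_def by (fastforce dest!: keys_mult[THEN subsetD] keys_add[THEN subsetD])

lemma add_mem_ideal_gen_RG:
  "p \<in> ideal_gen (RG d E) X \<Longrightarrow> q \<in> ideal_gen (RG d E) X \<Longrightarrow> p + q \<in> ideal_gen (RG d E) X"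
  by (rule add_mem_ideal_gen[OF zero_mem_RG add_mem_RG])

lemma mult_mem_ideal_gen_RG:
  "r \<in> RG d E \<Longrightarrow> p \<in> ideal_gen (RG d E) X \<Longrightarrow> r * p \<in> ideal_gen (RG d E) X"
  by (rule mult_mem_ideal_gen[OF mult_mem_RG])

lemma sum_mem_ideal_gen_RG:
  "(\<And>x. x \<in> A \<Longrightarrow> f x \<in> ideal_gen (RG d E) X) \<Longrightarrow> sum f A \<in> ideal_gen (RG d E) X"
  by (rule sum_mem_add_closed[OF zero_mem_ideal_gen add_mem_ideal_gen_RG])

lemma zero_mem_KG: "0 \<in> KG d E"
  unfolding KG_def JG_def MG_def using ideal_sumI[OF zero_mem_ideal_gen zero_mem_ideal_gen] by simp

lemma add_mem_KG:
  assumes "a \<in> KG d E" "b \<in> KG d E"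
  shows "a + b \<in> KG d E"
proof -
  obtain a1 a2 where "a = a1 + a2" "a1 \<in> JG d E" "a2 \<in> MG d E"
    using assms(1) unfolding KG_def by (rule ideal_sumE)
  moreover obtain b1 b2 where "b = b1 + b2" "b1 \<in> JG d E" "b2 \<in> MG d E"
    using assms(2) unfolding KG_def by (rule ideal_sumE)
  ultimately have "a + b = (a1 + b1) + (a2 + b2)" "a1 + b1 \<in> JG d E" "a2 + b2 \<in> MG d E"
    unfolding JG_def MG_def by (simp_all add: add_ac add_mem_ideal_gen_RG)
  then show ?thesis
    unfolding KG_def by (simp add: ideal_sumI)
qed

lemma mult_mem_KG:
  assumes "r \<in> RG d E" "a \<in> KG d E"
  shows "r * a \<in> KG d E"
proof -
  obtain a1 a2 where "a = a1 + a2" "a1 \<in> JG d E" "a2 \<in> MG d E"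
    using assms(2) unfolding KG_def by (rule ideal_sumE)
  then have "r * a = r * a1 + r * a2" "r * a1 \<in> JG d E" "r * a2 \<in> MG d E"
    unfolding JG_def MG_def by (simp_all add: distrib_left mult_mem_ideal_gen_RG assms(1))
  then show ?thesis
    unfolding KG_def by (simp add: ideal_sumI)
qed

lemma MG_subset_KG: "MG d E \<subseteq> KG d E"
  unfolding KG_def JG_def using ideal_sumI[OF zero_mem_ideal_gen] by fastforce

definition pair_exp :: "nat set \<Rightarrow> nat set \<Rightarrow> (nat set \<Rightarrow>\<^sub>0 nat)" where
  "pair_exp S T = Poly_Mapping.single S 1 + Poly_Mapping.single T 1"

lemma lookup_pair_exp:
  "Poly_Mapping.lookup (pair_exp S T) X = of_bool (X = S) + of_bool (X = T)"
  by (simp add: pair_exp_def lookup_add lookup_single when_def eq_commute)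

lemma keys_pair_exp: "Poly_Mapping.keys (pair_exp S T) = {S, T}"
  by (auto simp: in_keys_iff lookup_pair_exp)

lemma var_mult_var: "var S * var T = Poly_Mapping.single (pair_exp S T) 1"
  by (simp add: var_def mult_single pair_exp_def)

lemma sum_keys_pair_exp:
  "(\<Sum>X\<in>Poly_Mapping.keys (pair_exp S T). Poly_Mapping.lookup (pair_exp S T) X * h X) = h S + h T"
  by (cases "S = T") (simp_all add: keys_pair_exp lookup_pair_exp)

lemma mdeg_pair_exp: "mdeg (pair_exp S T) = 2"
  using sum_keys_pair_exp[of S T "\<lambda>_. 1"] by (simp add: mdeg_def)

lemma mdeg_eq_2_imp_pair_exp:
  assumes "mdeg \<alpha> = 2"
  obtains S T where "\<alpha> = pair_exp S T"
proof -
  let ?K = "Poly_Mapping.keys \<alpha>" and ?l = "Poly_Mapping.lookup \<alpha>"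
  have sum_l: "sum ?l ?K = 2"
    using assms by (simp add: mdeg_def)
  then obtain S where S: "S \<in> ?K"
    using sum_SucD[of ?l ?K 1] by auto
  have "sum (\<lambda>X. ?l X - of_bool (X = S)) ?K = sum ?l ?K - sum (\<lambda>X. of_bool (X = S)) ?K"
    by (rule sum_subtractf_nat) (auto simp: in_keys_iff)
  also have "\<dots> = 1"
    using sum_l S by simp
  finally obtain T where T: "T \<in> ?K" "?l T - of_bool (T = S) = 1"
    and others: "\<forall>X\<in>?K. X \<noteq> T \<longrightarrow> ?l X \<le> of_bool (X = S)"
    by (auto simp: sum_eq_Suc0_iff)
  have "\<alpha> = pair_exp S T"
  proof (rule poly_mapping_eqI)
    fix X
    show "?l X = Poly_Mapping.lookup (pair_exp S T) X"
    proof (cases "X \<in> ?K")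
      case True
      show ?thesis
      proof (cases "X = T")
        case True
        then show ?thesis
          using T(2) by (cases "T = S") (simp_all add: lookup_pair_exp)
      next
        case False
        with \<open>X \<in> ?K\<close> others have "?l X \<le> of_bool (X = S)" "?l X \<noteq> 0"
          by (auto simp: in_keys_iff)
        then show ?thesis
          using False by (cases "X = S") (simp_all add: lookup_pair_exp)
      qed
    next
      case False
      with S T(1) show ?thesis
        by (auto simp: lookup_pair_exp in_keys_iff)
    qed
  qed
  then show ?thesis ..
qed

lemma poly_mapping_sum_single_lookup:
  "p = (\<Sum>\<alpha>\<in>Poly_Mapping.keys p. Poly_Mapping.single \<alpha> (Poly_Mapping.lookup p \<alpha>))"
  by (rule poly_mapping_eqI) (auto simp: lookup_sum lookup_single when_def in_keys_iff)

lemma single_sum: "Poly_Mapping.single k (sum f A) = (\<Sum>a\<in>A. Poly_Mapping.single k (f a))"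
  by (induction A rule: infinite_finite_induct) (simp_all add: single_add)

lemma lookup_pi_exp:
  assumes "\<forall>X\<in>Poly_Mapping.keys \<alpha>. finite X"
  shows "Poly_Mapping.lookup (pi_exp \<alpha>) j =
    (\<Sum>X\<in>Poly_Mapping.keys \<alpha>. Poly_Mapping.lookup \<alpha> X * (of_bool (j = 0) + of_bool (j \<in> X)))"
  unfolding pi_exp_def lookup_sum
  by (rule sum.cong) (use assms in \<open>auto simp: lookup_add lookup_sum lookup_single when_def\<close>)

lemma lookup_pi_exp_pair_exp:
  assumes "finite S" "finite T"
  shows "Poly_Mapping.lookup (pi_exp (pair_exp S T)) j =
    2 * of_bool (j = 0) + of_bool (j \<in> S) + of_bool (j \<in> T)"
proof -
  have "\<forall>X\<in>Poly_Mapping.keys (pair_exp S T). finite X"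
    using assms by (simp add: keys_pair_exp)
  then have "Poly_Mapping.lookup (pi_exp (pair_exp S T)) j =
      (of_bool (j = 0) + of_bool (j \<in> S)) + (of_bool (j = 0) + of_bool (j \<in> T))"
    by (simp only: lookup_pi_exp sum_keys_pair_exp)
  then show ?thesis
    by simp
qed

lemma lookup_pi_exp_disjoint_pair_exp:
  assumes "finite S" "finite T" "S \<inter> T = {}"
  shows "Poly_Mapping.lookup (pi_exp (pair_exp S T)) j = 2 * of_bool (j = 0) + of_bool (j \<in> S \<union> T)"
  using assms by (auto simp: lookup_pi_exp_pair_exp)

lemma pi_exp_disjoint_pair_exp_eq_iff:
  assumes "finite S" "finite T" "S \<inter> T = {}" "finite S'" "finite T'" "S' \<inter> T' = {}"
  shows "pi_exp (pair_exp S T) = pi_exp (pair_exp S' T') \<longleftrightarrow> S \<union> T = S' \<union> T'"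
proof
  assume "pi_exp (pair_exp S T) = pi_exp (pair_exp S' T')"
  then have "Poly_Mapping.lookup (pi_exp (pair_exp S T)) j = Poly_Mapping.lookup (pi_exp (pair_exp S' T')) j" for j
    by simp
  then have "of_bool (j \<in> S \<union> T) = (of_bool (j \<in> S' \<union> T') :: nat)" for j
    by (simp add: lookup_pi_exp_disjoint_pair_exp assms)
  then have "j \<in> S \<union> T \<longleftrightarrow> j \<in> S' \<union> T'" for j
    by (simp only: of_bool_eq_iff)
  then show "S \<union> T = S' \<union> T'"
    by blast
next
  assume "S \<union> T = S' \<union> T'"
  then show "pi_exp (pair_exp S T) = pi_exp (pair_exp S' T')"
    by (intro poly_mapping_eqI) (simp add: lookup_pi_exp_disjoint_pair_exp assms)
qed

lemma pi_exp_pair_exp_neq: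
  assumes "finite S" "finite T" "S \<inter> T = {}" "finite S'" "finite T'" "S' \<inter> T' \<noteq> {}"
  shows "pi_exp (pair_exp S T) \<noteq> pi_exp (pair_exp S' T')"
proof -
  obtain j where "j \<in> S'" "j \<in> T'"
    using assms(6) by blast
  then have "Poly_Mapping.lookup (pi_exp (pair_exp S T)) j < Poly_Mapping.lookup (pi_exp (pair_exp S' T')) j"
    by (simp add: lookup_pi_exp_disjoint_pair_exp lookup_pi_exp_pair_exp assms)
  then show ?thesis
    by auto
qed

lemma lookup_piG:
  assumes "finite K" "Poly_Mapping.keys p \<subseteq> K"
  shows "Poly_Mapping.lookup (piG p) e = (\<Sum>\<alpha>\<in>{\<alpha>\<in>K. pi_exp \<alpha> = e}. Poly_Mapping.lookup p \<alpha>)"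
proof -
  have "Poly_Mapping.lookup (piG p) e = (\<Sum>\<alpha>\<in>K. if pi_exp \<alpha> = e then Poly_Mapping.lookup p \<alpha> else 0)"
    unfolding piG_def lookup_sum
    by (rule sum.mono_neutral_cong_left) (use assms in \<open>auto simp: lookup_single when_def in_keys_iff\<close>)
  then show ?thesis
    by (simp add: sum.inter_filter[OF assms(1)])
qed

lemma finite_stable_set: "S \<in> stable_sets d E \<Longrightarrow> finite S"
  unfolding stable_sets_def by (auto intro: finite_subset)

lemma binomial_mem_quadratic_IG:
  assumes "S1 \<in> stable_sets d E" "S2 \<in> stable_sets d E" "S3 \<in> stable_sets d E" "S4 \<in> stable_sets d E"
    and "S1 \<inter> S2 = {}" "S3 \<inter> S4 = {}" "S1 \<union> S2 = S3 \<union> S4"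
  shows "(var S1 * var S2 - var S3 * var S4 :: 'k::comm_ring_1 mpoly_sets)
    \<in> {p \<in> IG d E. homogeneous_of 2 p}"
proof -
  define a where "a = pair_exp S1 S2"
  define b where "b = pair_exp S3 S4"
  define g :: "'k mpoly_sets" where "g = Poly_Mapping.single a 1 - Poly_Mapping.single b 1"
  have keys_g: "Poly_Mapping.keys g \<subseteq> {a, b}"
    unfolding g_def using keys_diff[of "Poly_Mapping.single a (1::'k)" "Poly_Mapping.single b 1"] by auto
  have "g \<in> RG d E"
    using keys_g assms(1-4) unfolding RG_def by (auto simp: a_def b_def keys_pair_exp)
  moreover have "homogeneous_of 2 g"
    using keys_g unfolding homogeneous_of_def by (auto simp: a_def b_def mdeg_pair_exp)
  moreover have "piG g = 0"
  proof (rule poly_mapping_eqI)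
    fix e
    have "pi_exp a = pi_exp b"
      unfolding a_def b_def using assms
      by (simp add: pi_exp_disjoint_pair_exp_eq_iff finite_stable_set)
    then have "{\<alpha> \<in> {a, b}. pi_exp \<alpha> = e} = (if pi_exp a = e then {a, b} else {})"
      by auto
    moreover have "sum (Poly_Mapping.lookup g) {a, b} = 0"
      by (cases "a = b") (simp_all add: g_def lookup_minus lookup_single)
    ultimately show "Poly_Mapping.lookup (piG g) e = Poly_Mapping.lookup 0 e"
      by (simp add: lookup_piG[OF _ keys_g])
  qed
  ultimately show ?thesis
    by (simp add: IG_def g_def a_def b_def var_mult_var)
qed

lemma single_pair_exp_mem_MG:
  assumes "S \<in> stable_sets d E" "T \<in> stable_sets d E" "S \<inter> T \<noteq> {}"
  shows "Poly_Mapping.single (pair_exp S T) c \<in> MG d E"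
proof -
  have "Poly_Mapping.single (pair_exp S T) c = Poly_Mapping.single 0 c * (var S * var T)"
    by (simp add: var_mult_var mult_single)
  also have "\<dots> \<in> MG d E"
    unfolding MG_def using assms by (intro mult_generator_mem_ideal_gen single_zero_mem_RG) blast
  finally show ?thesis .
qed

definition disjoint_stable_pair :: "nat \<Rightarrow> nat set set \<Rightarrow> (nat set \<Rightarrow>\<^sub>0 nat) \<Rightarrow> bool" where
  "disjoint_stable_pair d E \<alpha> \<longleftrightarrow>
    (\<exists>S T. \<alpha> = pair_exp S T \<and> S \<in> stable_sets d E \<and> T \<in> stable_sets d E \<and> S \<inter> T = {})"

lemma disjoint_stable_pair_if_pi_exp_eq:
  assumes "disjoint_stable_pair d E \<beta>" "S \<in> stable_sets d E" "T \<in> stable_sets d E"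
    and "pi_exp (pair_exp S T) = pi_exp \<beta>"
  shows "disjoint_stable_pair d E (pair_exp S T)"
proof -
  obtain S0 T0 where \<beta>: "\<beta> = pair_exp S0 T0" "S0 \<in> stable_sets d E" "T0 \<in> stable_sets d E" "S0 \<inter> T0 = {}"
    using assms(1) unfolding disjoint_stable_pair_def by blast
  have "S \<inter> T = {}"
  proof (rule ccontr)
    assume "S \<inter> T \<noteq> {}"
    then have "pi_exp \<beta> \<noteq> pi_exp (pair_exp S T)"
      using \<beta> assms(2,3) by (simp add: pi_exp_pair_exp_neq finite_stable_set)
    with assms(4) show False
      by simp
  qed
  with assms(2,3) show ?thesis
    unfolding disjoint_stable_pair_def by blast
qed

lemma fibre_sum_mem_JG:
  assumes "finite C" "disjoint_stable_pair d E \<beta>"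
    and "\<And>\<alpha>. \<alpha> \<in> C \<Longrightarrow> disjoint_stable_pair d E \<alpha> \<and> pi_exp \<alpha> = pi_exp \<beta>"
    and "sum c C = 0"
  shows "(\<Sum>\<alpha>\<in>C. Poly_Mapping.single \<alpha> (c \<alpha>)) \<in> JG d E"
proof -
  let ?binomials = "{var S1 * var S2 - var S3 * var S4 | S1 S2 S3 S4.
    S1 \<in> stable_sets d E \<and> S2 \<in> stable_sets d E \<and> S3 \<in> stable_sets d E \<and> S4 \<in> stable_sets d E
    \<and> S1 \<inter> S2 = {} \<and> S3 \<inter> S4 = {} \<and> S1 \<union> S2 = S3 \<union> S4}"
  obtain S T where \<beta>: "\<beta> = pair_exp S T" "S \<in> stable_sets d E" "T \<in> stable_sets d E" "S \<inter> T = {}"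
    using assms(2) unfolding disjoint_stable_pair_def by blast
  have "(\<Sum>\<alpha>\<in>C. Poly_Mapping.single \<alpha> (c \<alpha>)) =
      (\<Sum>\<alpha>\<in>C. Poly_Mapping.single \<alpha> (c \<alpha>) - Poly_Mapping.single \<beta> (c \<alpha>))"
    using assms(4) by (simp add: sum_subtractf single_sum[symmetric])
  also have "\<dots> \<in> JG d E"
    unfolding JG_def
  proof (rule sum_mem_ideal_gen_RG)
    fix \<alpha> assume "\<alpha> \<in> C"
    then obtain S' T' where \<alpha>: "\<alpha> = pair_exp S' T'" "S' \<in> stable_sets d E" "T' \<in> stable_sets d E"
      "S' \<inter> T' = {}" "pi_exp \<alpha> = pi_exp \<beta>"
      using assms(3) unfolding disjoint_stable_pair_def by blast
    then have "S' \<union> T' = S \<union> T"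
      using \<beta> by (simp add: pi_exp_disjoint_pair_exp_eq_iff finite_stable_set)
    then have binomial: "var S' * var T' - var S * var T \<in> ?binomials"
      using \<alpha> \<beta> by blast
    have "Poly_Mapping.single \<alpha> (c \<alpha>) - Poly_Mapping.single \<beta> (c \<alpha>) =
        Poly_Mapping.single 0 (c \<alpha>) * (var S' * var T' - var S * var T)"
      by (simp add: \<alpha>(1) \<beta>(1) var_mult_var mult_single right_diff_distrib)
    also have "\<dots> \<in> ideal_gen (RG d E) ?binomials"
      by (rule mult_generator_mem_ideal_gen[OF binomial single_zero_mem_RG])
    finally show "Poly_Mapping.single \<alpha> (c \<alpha>) - Poly_Mapping.single \<beta> (c \<alpha>)
        \<in> ideal_gen (RG d E) ?binomials" .
  qed
  finally show ?thesis .
qed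

lemma keys_quadratic_RG:
  assumes "p \<in> RG d E" "homogeneous_of 2 p" "\<alpha> \<in> Poly_Mapping.keys p"
  obtains S T where "\<alpha> = pair_exp S T" "S \<in> stable_sets d E" "T \<in> stable_sets d E"
proof -
  obtain S T where "\<alpha> = pair_exp S T"
    using assms(2,3) mdeg_eq_2_imp_pair_exp unfolding homogeneous_of_def by blast
  moreover have "Poly_Mapping.keys \<alpha> \<subseteq> stable_sets d E"
    using assms(1,3) unfolding RG_def by blast
  ultimately show ?thesis
    using that by (simp add: keys_pair_exp)
qed

lemma overlapping_part_mem_MG:
  assumes "p \<in> RG d E" "homogeneous_of 2 p"
  shows "(\<Sum>\<alpha>\<in>{\<alpha>\<in>Poly_Mapping.keys p. \<not> disjoint_stable_pair d E \<alpha>}.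
      Poly_Mapping.single \<alpha> (Poly_Mapping.lookup p \<alpha>)) \<in> MG d E"
  unfolding MG_def
proof (rule sum_mem_ideal_gen_RG, fold MG_def)
  fix \<alpha> assume \<alpha>: "\<alpha> \<in> {\<alpha>\<in>Poly_Mapping.keys p. \<not> disjoint_stable_pair d E \<alpha>}"
  then obtain S T where "\<alpha> = pair_exp S T" "S \<in> stable_sets d E" "T \<in> stable_sets d E"
    using keys_quadratic_RG[OF assms] by blast
  moreover from this have "S \<inter> T \<noteq> {}"
    using \<alpha> unfolding disjoint_stable_pair_def by blast
  ultimately show "Poly_Mapping.single \<alpha> (Poly_Mapping.lookup p \<alpha>) \<in> MG d E"
    by (simp add: single_pair_exp_mem_MG)
qed

lemma disjoint_part_mem_JG:
  assumes "p \<in> IG d E" "homogeneous_of 2 p"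
  shows "(\<Sum>\<alpha>\<in>{\<alpha>\<in>Poly_Mapping.keys p. disjoint_stable_pair d E \<alpha>}.
      Poly_Mapping.single \<alpha> (Poly_Mapping.lookup p \<alpha>)) \<in> JG d E"
proof -
  have p: "p \<in> RG d E" "piG p = 0"
    using assms(1) unfolding IG_def by simp_all
  define A where "A = {\<alpha>\<in>Poly_Mapping.keys p. disjoint_stable_pair d E \<alpha>}"
  let ?m = "\<lambda>\<alpha>. Poly_Mapping.single \<alpha> (Poly_Mapping.lookup p \<alpha>)"
  have "sum ?m A = (\<Sum>e\<in>pi_exp ` A. \<Sum>\<alpha>\<in>{\<alpha>\<in>A. pi_exp \<alpha> = e}. ?m \<alpha>)"
    by (rule sum.group[symmetric]) (simp_all add: A_def)
  also have "\<dots> \<in> JG d E"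
    unfolding JG_def
  proof (rule sum_mem_ideal_gen_RG, fold JG_def)
    fix e assume "e \<in> pi_exp ` A"
    then obtain \<beta> where \<beta>: "\<beta> \<in> A" "e = pi_exp \<beta>"
      by blast
    have "\<alpha> \<in> A" if key: "\<alpha> \<in> Poly_Mapping.keys p" and fibre: "pi_exp \<alpha> = e" for \<alpha>
    proof -
      obtain S T where "\<alpha> = pair_exp S T" "S \<in> stable_sets d E" "T \<in> stable_sets d E"
        using keys_quadratic_RG[OF p(1) assms(2) key] .
      then have "disjoint_stable_pair d E \<alpha>"
        using disjoint_stable_pair_if_pi_exp_eq[of d E \<beta> S T] \<beta> fibre by (simp add: A_def)
      with key show ?thesis
        by (simp add: A_def)
    qed
    then have "{\<alpha>\<in>A. pi_exp \<alpha> = e} = {\<alpha>\<in>Poly_Mapping.keys p. pi_exp \<alpha> = e}"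
      unfolding A_def by blast
    then have "sum (Poly_Mapping.lookup p) {\<alpha>\<in>A. pi_exp \<alpha> = e} = 0"
      using lookup_piG[OF finite_keys subset_refl, of p e] p(2) by simp
    then show "(\<Sum>\<alpha>\<in>{\<alpha>\<in>A. pi_exp \<alpha> = e}. ?m \<alpha>) \<in> JG d E"
      using \<beta> by (intro fibre_sum_mem_JG) (auto simp: A_def)
  qed
  finally show ?thesis
    unfolding A_def .
qed

lemma quadratic_IG_mem_KG:
  assumes "p \<in> IG d E" "homogeneous_of 2 p"
  shows "p \<in> KG d E"
proof -
  let ?m = "\<lambda>\<alpha>. Poly_Mapping.single \<alpha> (Poly_Mapping.lookup p \<alpha>)"
  let ?D = "{\<alpha>\<in>Poly_Mapping.keys p. disjoint_stable_pair d E \<alpha>}"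
  let ?O = "{\<alpha>\<in>Poly_Mapping.keys p. \<not> disjoint_stable_pair d E \<alpha>}"
  have "p = sum ?m (Poly_Mapping.keys p)"
    by (rule poly_mapping_sum_single_lookup)
  also have "\<dots> = sum ?m (?D \<union> ?O)"
    by (rule arg_cong[where f = "sum ?m"]) blast
  also have "\<dots> = sum ?m ?D + sum ?m ?O"
    by (rule sum.union_disjoint) auto
  also have "\<dots> \<in> KG d E"
    unfolding KG_def using assms IG_def
    by (intro ideal_sumI disjoint_part_mem_JG overlapping_part_mem_MG) auto
  finally show ?thesis .
qed

theorem corollary6p2:
  fixes d :: nat and E :: "nat set set"
  assumes "simple_graph_on d E"
  shows "(KG d E :: 'k::field mpoly_sets set) =
         ideal_sum (ideal_gen (RG d E) {p \<in> IG d E. homogeneous_of 2 p}) (MG d E)"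
proof
  have "JG d E \<subseteq> (ideal_gen (RG d E) {p \<in> IG d E. homogeneous_of 2 p} :: 'k mpoly_sets set)"
    unfolding JG_def by (rule ideal_gen_mono) (use binomial_mem_quadratic_IG in blast)
  then show "(KG d E :: 'k mpoly_sets set)
      \<subseteq> ideal_sum (ideal_gen (RG d E) {p \<in> IG d E. homogeneous_of 2 p}) (MG d E)"
    unfolding KG_def by (rule ideal_sum_mono) simp
next
  have "(ideal_gen (RG d E) {p \<in> IG d E. homogeneous_of 2 p} :: 'k mpoly_sets set) \<subseteq> KG d E"
  proof (rule ideal_gen_least[OF zero_mem_KG add_mem_KG])
    fix r g :: "'k mpoly_sets"
    assume "r \<in> RG d E" "g \<in> {p \<in> IG d E. homogeneous_of 2 p}"
    then show "r * g \<in> KG d E"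
      by (simp add: mult_mem_KG quadratic_IG_mem_KG)
  qed
  then show "ideal_sum (ideal_gen (RG d E) {p \<in> IG d E. homogeneous_of 2 p}) (MG d E)
      \<subseteq> (KG d E :: 'k mpoly_sets set)"
    using MG_subset_KG add_mem_KG by (rule ideal_sum_least)
qed

end
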